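(* Let $V=\{0,1,\dots,20\}$ and let $H_1=(V,E_1)$, $H_2=(V,E_2)$, $H_3=(V,E_3)$, $H_4=(V,E_4)$, where $E_1=\{\{0,1,2\},\{0,3,4\},\{1,5,6\},\{0,7,8\},\{2,9,10\},\{1,11,12\},\{9,13,14\},\{16,3,15\},\{17,18,7\},\{19,20,13\}\}$, $E_2=\{\{0,1,2\},\{0,3,4\},\{1,5,6\},\{0,7,8\},\{2,9,10\},\{1,11,12\},\{9,13,14\},\{16,3,15\},\{17,18,5\},\{19,20,15\}\}$, $E_3=\{\{0,1,2\},\{0,3,4\},\{1,5,6\},\{0,7,8\},\{5,9,10\},\{5,11,12\},\{0,13,14\},\{16,2,15\},\{1,17,18\},\{19,20,15\}\}$, $E_4=\{\{0,1,2\},\{0,3,4\},\{1,5,6\},\{0,7,8\},\{2,9,10\},\{1,11,12\},\{0,13,14\},\{16,9,15\},\{17,18,9\},\{3,19,20\}\}$. Then $H_1,H_2,H_3,H_4$ are $3$-uniform hypertrees, $H_1$ is not isomorphic to $H_2$, $H_3$ is not isomorphic to $H_4$, and $X_{H_1}=X_{H_2}$ and $X_{H_3}=X_{H_4}$. In particular, the chromatic symmetric function does not distinguish $3$-uniform hypertrees up to isomorphism.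
   Context: A hypergraph $(V,E)$ has $E$ a set of subsets of $V$; it is $3$-uniform if every hyperedge has $3$ elements. A hypertree is a connected hypergraph with no cycle, where a cycle is a sequence $(v_1,e_1,\dots,v_\ell,e_\ell,v_{\ell+1})$ with $\ell\ge2$, $v_i,v_{i+1}\in e_i\in E$, all vertices and hyperedges distinct except $v_1=v_{\ell+1}$, and connectivity is via such sequences with all entries distinct. Two hypergraphs are isomorphic if there is a bijection of vertex sets inducing a bijection of hyperedge sets. The chromatic symmetric function is $X_H=\sum_f\prod_{v\in V}x_{f(v)}$ in commuting variables, summed over all $f:V\to\{1,2,\dots\}$ with no monochromatic hyperedge. *)

theory Defs
  imports Main "HOL-Library.FuncSet"
begin

definition is_hypergraph :: "'a set \<Rightarrow> 'a set set \<Rightarrow> bool" where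
  "is_hypergraph V E \<longleftrightarrow> (\<forall>e\<in>E. e \<subseteq> V)"

definition uniform3 :: "'a set set \<Rightarrow> bool" where
  "uniform3 E \<longleftrightarrow> (\<forall>e\<in>E. card e = 3)"

text \<open>An alternating sequence (v_1, e_1, ..., v_l, e_l, v_{l+1}) represented by the list
  vs = [v_1,...,v_{l+1}] and es = [e_1,...,e_l], with v_i, v_{i+1} in e_i in E.\<close>
definition hwalk :: "'a set \<Rightarrow> 'a set set \<Rightarrow> 'a list \<Rightarrow> 'a set list \<Rightarrow> bool" where
  "hwalk V E vs es \<longleftrightarrow> length vs = Suc (length es) \<and> set vs \<subseteq> V \<and>
     (\<forall>i<length es. es ! i \<in> E \<and> vs ! i \<in> es ! i \<and> vs ! Suc i \<in> es ! i)"

definition hcycle :: "'a set \<Rightarrow> 'a set set \<Rightarrow> 'a list \<Rightarrow> 'a set list \<Rightarrow> bool" where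
  "hcycle V E vs es \<longleftrightarrow> hwalk V E vs es \<and> length es \<ge> 2 \<and>
     distinct es \<and> distinct (butlast vs) \<and> hd vs = last vs"

definition hpath :: "'a set \<Rightarrow> 'a set set \<Rightarrow> 'a list \<Rightarrow> 'a set list \<Rightarrow> bool" where
  "hpath V E vs es \<longleftrightarrow> hwalk V E vs es \<and> distinct es \<and> distinct vs"

definition hconnected :: "'a set \<Rightarrow> 'a set set \<Rightarrow> bool" where
  "hconnected V E \<longleftrightarrow> (\<forall>u\<in>V. \<forall>v\<in>V. u \<noteq> v \<longrightarrow>
     (\<exists>vs es. hpath V E vs es \<and> hd vs = u \<and> last vs = v))"

definition hypertree :: "'a set \<Rightarrow> 'a set set \<Rightarrow> bool" where
  "hypertree V E \<longleftrightarrow> is_hypergraph V E \<and> hconnected V E \<and> \<not> (\<exists>vs es. hcycle V E vs es)"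

definition hyp_isomorphic :: "'a set \<Rightarrow> 'a set set \<Rightarrow> 'b set \<Rightarrow> 'b set set \<Rightarrow> bool" where
  "hyp_isomorphic V1 E1 V2 E2 \<longleftrightarrow>
     (\<exists>\<sigma>. bij_betw \<sigma> V1 V2 \<and> bij_betw (\<lambda>e. \<sigma> ` e) E1 E2)"

definition proper_colorings :: "'a set \<Rightarrow> 'a set set \<Rightarrow> ('a \<Rightarrow> nat) set" where
  "proper_colorings V E = {f \<in> V \<rightarrow>\<^sub>E {1..}. \<forall>e\<in>E. \<not> (\<exists>c. \<forall>v\<in>e. f v = c)}"

text \<open>The chromatic symmetric function X_H, represented as a formal power series in the
  commuting variables x_1, x_2, ...: it maps each exponent vector \<alpha> (monomial
  \<Prod>i x_i^{\<alpha> i}) to its coefficient, the number of proper colourings f with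
  \<Prod>v x_{f v} equal to that monomial.\<close>
definition chrom_symfun :: "'a set \<Rightarrow> 'a set set \<Rightarrow> (nat \<Rightarrow> nat) \<Rightarrow> nat" where
  "chrom_symfun V E = (\<lambda>\<alpha>. card {f \<in> proper_colorings V E. \<forall>i. card {v \<in> V. f v = i} = \<alpha> i})"

definition V21 :: "nat set" where "V21 = {0..20}"

definition E1 :: "nat set set" where
  "E1 = {{0,1,2},{0,3,4},{1,5,6},{0,7,8},{2,9,10},{1,11,12},{9,13,14},{16,3,15},{17,18,7},{19,20,13}}"
definition E2 :: "nat set set" where
  "E2 = {{0,1,2},{0,3,4},{1,5,6},{0,7,8},{2,9,10},{1,11,12},{9,13,14},{16,3,15},{17,18,5},{19,20,15}}"
definition E3 :: "nat set set" where
  "E3 = {{0,1,2},{0,3,4},{1,5,6},{0,7,8},{5,9,10},{5,11,12},{0,13,14},{16,2,15},{1,17,18},{19,20,15}}"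
definition E4 :: "nat set set" where
  "E4 = {{0,1,2},{0,3,4},{1,5,6},{0,7,8},{2,9,10},{1,11,12},{0,13,14},{16,9,15},{17,18,9},{3,19,20}}"

end

theory Submission
  imports Defs
begin

text \<open>All four hypergraphs are hypertrees because each is grown from a single vertex by attaching
  its edges one at a time, every new edge meeting the vertices already present in exactly one vertex.

  For the chromatic symmetric function, delete the edge \<open>{0, 1, 2}\<close>: a proper colouring of the
  remaining hyperforest \<open>F\<close> stays proper unless it is constant on \<open>{0, 1, 2}\<close>, and the colourings
  constant on \<open>{0, 1, 2}\<close> are those of \<open>F\<close> with \<open>{0, 1, 2}\<close> contracted to one vertex.  In both
  pairs the deleted hyperforests are isomorphic and so are their contractions, hence
  \<open>X\<^sub>H\<^sub>1 = X\<^sub>H\<^sub>2\<close> and \<open>X\<^sub>H\<^sub>3 = X\<^sub>H\<^sub>4\<close>.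

  The hypertrees are told apart by pendant edges (all of whose vertices but one lie in no other
  edge): \<open>H\<^sub>1\<close> has a vertex carrying two of them and \<open>H\<^sub>3\<close> one carrying three, while
  \<open>H\<^sub>2\<close> and \<open>H\<^sub>4\<close> have no such vertex.\<close>

section \<open>Paths and cycles\<close>

lemma hpath_mono: "hpath V E vs es \<Longrightarrow> E \<subseteq> E' \<Longrightarrow> hpath V E' vs es"
  unfolding hpath_def hwalk_def by blast

lemma hwalk_vertices_subset:
  assumes "hwalk V E vs es" "es \<noteq> []"
  shows "set vs \<subseteq> \<Union>E"
proof
  fix w assume "w \<in> set vs"
  then obtain k where k: "k < length vs" "vs ! k = w" by (auto simp: in_set_conv_nth)
  show "w \<in> \<Union>E"
  proof (cases "k < length es")
    case True
    then show ?thesis using assms(1) k unfolding hwalk_def by blast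
  next
    case False
    then have "k = length es" using k assms(1) unfolding hwalk_def by auto
    then have "k = Suc (k - 1)" "k - 1 < length es" using assms(2) by auto
    then show ?thesis using assms(1) k unfolding hwalk_def by (metis UnionI)
  qed
qed

lemma hpath_edge:
  "u \<in> V \<Longrightarrow> v \<in> V \<Longrightarrow> u \<noteq> v \<Longrightarrow> u \<in> e \<Longrightarrow> v \<in> e \<Longrightarrow> e \<in> E \<Longrightarrow> hpath V E [u, v] [e]"
  unfolding hpath_def hwalk_def by auto

lemma hpath_snoc:
  assumes "hpath V E vs es" "last vs \<in> e" "a \<in> e" "a \<in> V" "a \<notin> set vs" "e \<notin> set es" "e \<in> E"
  shows "hpath V E (vs @ [a]) (es @ [e])"
proof -
  have L: "length vs = Suc (length es)" using assms(1) unfolding hpath_def hwalk_def by auto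
  then have last_vs: "last vs = vs ! length es"
    by (metis diff_Suc_1 last_conv_nth list.size(3) nat.distinct(1))
  have "(es @ [e]) ! i \<in> E \<and> (vs @ [a]) ! i \<in> (es @ [e]) ! i \<and> (vs @ [a]) ! Suc i \<in> (es @ [e]) ! i"
    if i: "i < length (es @ [e])" for i
  proof -
    consider "i < length es" | "i = length es" using i by fastforce
    then show ?thesis
    proof cases
      case 1
      then show ?thesis using assms(1) L unfolding hpath_def hwalk_def by (auto simp: nth_append)
    next
      case 2
      then show ?thesis using assms L last_vs by (auto simp: nth_append)
    qed
  qed
  then show ?thesis using assms L unfolding hpath_def hwalk_def by auto
qed

lemma hpath_rev:
  assumes "hpath V E vs es"
  shows "hpath V E (rev vs) (rev es)"
proof -
  have L: "length vs = Suc (length es)"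
    and step: "\<And>j. j < length es \<Longrightarrow> es ! j \<in> E \<and> vs ! j \<in> es ! j \<and> vs ! Suc j \<in> es ! j"
    using assms unfolding hpath_def hwalk_def by auto
  have "rev es ! i \<in> E \<and> rev vs ! i \<in> rev es ! i \<and> rev vs ! Suc i \<in> rev es ! i"
    if i: "i < length es" for i
  proof -
    define j where "j = length es - Suc i"
    have "j < length es" "rev es ! i = es ! j" "rev vs ! i = vs ! Suc j" "rev vs ! Suc i = vs ! j"
      using i L by (simp_all add: j_def rev_nth Suc_diff_Suc)
    then show ?thesis using step by auto
  qed
  then show ?thesis using assms L unfolding hpath_def hwalk_def by auto
qed

definition linked :: "'a set \<Rightarrow> 'a set set \<Rightarrow> 'a \<Rightarrow> 'a \<Rightarrow> bool" where
  "linked V E u v \<longleftrightarrow> (\<exists>vs es. hpath V E vs es \<and> hd vs = u \<and> last vs = v)"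

lemma linked_sym: "linked V E u v \<Longrightarrow> linked V E v u"
proof -
  assume "linked V E u v"
  then obtain vs es where p: "hpath V E vs es" "hd vs = u" "last vs = v"
    unfolding linked_def by blast
  have "vs \<noteq> []" using p(1) unfolding hpath_def hwalk_def by auto
  then show "linked V E v u"
    unfolding linked_def using hpath_rev[OF p(1)] p by (metis hd_rev last_rev)
qed

definition hacyclic :: "'a set \<Rightarrow> 'a set set \<Rightarrow> bool" where
  "hacyclic V E \<longleftrightarrow> \<not> (\<exists>vs es. hcycle V E vs es)"

lemma hacyclic_empty: "hacyclic V {}"
  unfolding hacyclic_def hcycle_def hwalk_def by (metis empty_iff less_le_trans zero_less_numeral)

lemma hcycle_closed: "hcycle V E vs es \<Longrightarrow> vs ! length es = vs ! 0"
  unfolding hcycle_def hwalk_def by (metis diff_Suc_1 hd_conv_nth last_conv_nth list.size(3) nat.distinct(1))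

lemma hcycle_vertex_in_two_edges:
  assumes c: "hcycle V E vs es" and w: "w \<in> set vs"
  obtains k k' where "k < length es" "k' < length es" "k \<noteq> k'" "w \<in> es ! k" "w \<in> es ! k'"
proof -
  define l where "l = length es"
  have L: "length vs = Suc l" and l2: "2 \<le> l"
    and step: "\<And>i. i < l \<Longrightarrow> vs ! i \<in> es ! i \<and> vs ! Suc i \<in> es ! i"
    using c unfolding hcycle_def hwalk_def l_def by auto
  have closed: "vs ! l = vs ! 0" using hcycle_closed[OF c] by (simp add: l_def)
  obtain j where j: "j < l" "vs ! j = w"
  proof -
    obtain j where "j < Suc l" "vs ! j = w" using w L by (auto simp: in_set_conv_nth)
    then show thesis using that[of j] that[of 0] closed l2 by (cases "j = l") auto
  qed
  show thesis
  proof (cases j)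
    case 0
    have "vs ! Suc (l - 1) = vs ! 0" using closed l2 by simp
    then show thesis using that[of 0 "l - 1"] step[of 0] step[of "l - 1"] j 0 l2 by (auto simp: l_def)
  next
    case (Suc k)
    then show thesis using that[of j k] step[of j] step[of k] j by (auto simp: l_def)
  qed
qed

lemma hcycle_consecutive_distinct:
  assumes c: "hcycle V E vs es" and i: "i < length es"
  shows "vs ! i \<noteq> vs ! Suc i"
proof -
  define l where "l = length es"
  have L: "length vs = Suc l" and l2: "2 \<le> l" and dv: "distinct (butlast vs)"
    using c unfolding hcycle_def hwalk_def l_def by auto
  have inj: "j = k" if "j < l" "k < l" "vs ! j = vs ! k" for j k
    using that dv L nth_eq_iff_index_eq[OF dv, of j k] by (simp add: nth_butlast)
  show ?thesis
  proof (cases "Suc i < l")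
    case True
    then show ?thesis using inj[of i "Suc i"] by auto
  next
    case False
    then have "Suc i = l" "i \<noteq> 0" using i l2 by (auto simp: l_def)
    then have "vs ! Suc i = vs ! 0" using hcycle_closed[OF c] by (simp add: l_def)
    moreover have "vs ! i \<noteq> vs ! 0" using inj[of i 0] \<open>Suc i = l\<close> \<open>i \<noteq> 0\<close> by auto
    ultimately show ?thesis by simp
  qed
qed

lemma hacyclic_insert_pendant:
  assumes acyc: "hacyclic V E" and pendant: "e \<inter> \<Union>E \<subseteq> {x}"
  shows "hacyclic V (insert e E)"
  unfolding hacyclic_def
proof
  assume "\<exists>vs es. hcycle V (insert e E) vs es"
  then obtain vs es where c: "hcycle V (insert e E) vs es" by blast
  have L: "length vs = Suc (length es)" and de: "distinct es"
    and step: "\<And>i. i < length es \<Longrightarrow> es ! i \<in> insert e E \<and> vs ! i \<in> es ! i \<and> vs ! Suc i \<in> es ! i"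
    using c unfolding hcycle_def hwalk_def by auto
  show False
  proof (cases "e \<in> set es")
    case False
    then have "hcycle V E vs es"
      using c step unfolding hcycle_def hwalk_def by (metis insertE nth_mem)
    then show False using acyc unfolding hacyclic_def by blast
  next
    case True
    then obtain i where i: "i < length es" "es ! i = e" by (auto simp: in_set_conv_nth)
    obtain w where w: "w \<in> e" "w \<noteq> x" "w \<in> set vs"
      using step[OF i(1)] i hcycle_consecutive_distinct[OF c i(1)] L
      by (metis Suc_mono less_SucI nth_mem)
    obtain m where m: "m < length es" "m \<noteq> i" "w \<in> es ! m"
      using hcycle_vertex_in_two_edges[OF c w(3)] by metis
    have "es ! m \<noteq> e" using m i de nth_eq_iff_index_eq by metis
    then have "w \<in> \<Union>E" using step[OF m(1)] m(3) by blast
    then show False using pendant w by blast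
  qed
qed

section \<open>Hypertrees grown by pendant edges\<close>

definition hconnected_on :: "'a set \<Rightarrow> 'a set \<Rightarrow> 'a set set \<Rightarrow> bool" where
  "hconnected_on V W E \<longleftrightarrow> (\<forall>u\<in>W. \<forall>v\<in>W. u \<noteq> v \<longrightarrow> linked V E u v)"

lemma linked_mono:
  assumes "linked V E u v" "E \<subseteq> E'"
  shows "linked V E' u v"
proof -
  obtain vs es where p: "hpath V E vs es" "hd vs = u" "last vs = v"
    using assms(1) unfolding linked_def by blast
  have "hpath V E' vs es" using p(1) assms(2) by (rule hpath_mono)
  then show ?thesis using p(2,3) unfolding linked_def by blast
qed

lemma linked_to_attached_vertex:
  assumes conn: "hconnected_on V W E" and EW: "\<Union>E \<subseteq> W"
    and attach: "e \<inter> W = {x}" and eV: "e \<subseteq> V"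
    and u: "u \<in> W \<union> e" and v: "v \<in> e - W" and uv: "u \<noteq> v"
  shows "linked V (insert e E) u v"
proof (cases "u \<in> e")
  case True
  then have "hpath V (insert e E) [u, v] [e]" using v uv eV by (intro hpath_edge) auto
  then show ?thesis unfolding linked_def by (intro exI[of _ "[u, v]"] exI[of _ "[e]"]) simp
next
  case False
  then have "u \<in> W" "u \<noteq> x" "x \<in> W" using u attach by auto
  then have "linked V E u x" using conn unfolding hconnected_on_def by blast
  then obtain vs es where p: "hpath V E vs es" "hd vs = u" "last vs = x"
    unfolding linked_def by blast
  have "es \<noteq> []"
  proof
    assume "es = []"
    then have "length vs = 1" using p(1) unfolding hpath_def hwalk_def by simp
    then show False using p \<open>u \<noteq> x\<close> by (cases vs) auto
  qed
  then have "set vs \<subseteq> W" using hwalk_vertices_subset p(1) EW unfolding hpath_def by blast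
  have "e \<notin> E" using v EW by blast
  then have "e \<notin> set es" using p(1) unfolding hpath_def hwalk_def by (metis in_set_conv_nth)
  moreover have "hpath V (insert e E) vs es" using p(1) by (rule hpath_mono) blast
  ultimately have "hpath V (insert e E) (vs @ [v]) (es @ [e])"
    using \<open>set vs \<subseteq> W\<close> p(3) attach v eV by (intro hpath_snoc) auto
  moreover have "hd (vs @ [v]) = u" using p(1,2) unfolding hpath_def hwalk_def by (cases vs) auto
  ultimately show ?thesis unfolding linked_def by (intro exI[of _ "vs @ [v]"] exI[of _ "es @ [e]"]) simp
qed

lemma hconnected_on_attach:
  assumes conn: "hconnected_on V W E" and EW: "\<Union>E \<subseteq> W"
    and attach: "e \<inter> W = {x}" and eV: "e \<subseteq> V"
  shows "hconnected_on V (W \<union> e) (insert e E)"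
  unfolding hconnected_on_def
proof (intro ballI impI)
  fix u v assume u: "u \<in> W \<union> e" and v: "v \<in> W \<union> e" and uv: "u \<noteq> v"
  consider "u \<in> W" "v \<in> W" | "v \<in> e - W" | "u \<in> e - W" using u v by blast
  then show "linked V (insert e E) u v"
  proof cases
    case 1
    then have "linked V E u v" using conn uv unfolding hconnected_on_def by blast
    then show ?thesis by (rule linked_mono) blast
  next
    case 2
    show ?thesis using conn EW attach eV u 2 uv by (rule linked_to_attached_vertex)
  next
    case 3
    have "linked V (insert e E) v u" using conn EW attach eV v 3 uv[symmetric]
      by (rule linked_to_attached_vertex)
    then show ?thesis by (rule linked_sym)
  qed
qed

definition subhypertree :: "'a set \<Rightarrow> 'a set \<Rightarrow> 'a set set \<Rightarrow> bool" where
  "subhypertree V W E \<longleftrightarrow> hconnected_on V W E \<and> hacyclic V E \<and> \<Union>E \<subseteq> W \<and> W \<subseteq> V"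

lemma subhypertree_singleton: "r \<in> V \<Longrightarrow> subhypertree V {r} {}"
  unfolding subhypertree_def hconnected_on_def using hacyclic_empty by auto

lemma subhypertree_attach:
  assumes sub: "subhypertree V W E" and attach: "e \<inter> W = {x}" and eV: "e \<subseteq> V"
  shows "subhypertree V (W \<union> e) (insert e E)"
proof -
  have conn: "hconnected_on V W E" and acyc: "hacyclic V E" and EW: "\<Union>E \<subseteq> W" and WV: "W \<subseteq> V"
    using sub unfolding subhypertree_def by auto
  have "e \<inter> \<Union>E \<subseteq> {x}" using attach EW by blast
  with acyc have "hacyclic V (insert e E)" by (rule hacyclic_insert_pendant)
  moreover have "hconnected_on V (W \<union> e) (insert e E)" using conn EW attach eV by (rule hconnected_on_attach)
  moreover have "\<Union>(insert e E) \<subseteq> W \<union> e" "W \<union> e \<subseteq> V" using EW WV eV by auto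
  ultimately show ?thesis unfolding subhypertree_def by blast
qed

lemma hypertree_if_subhypertree: "subhypertree V V E \<Longrightarrow> hypertree V E"
  unfolding subhypertree_def hypertree_def is_hypergraph_def hconnected_on_def hconnected_def
    hacyclic_def linked_def by (simp add: Sup_le_iff)

fun pendant_sequence :: "'a set \<Rightarrow> 'a set list \<Rightarrow> bool" where
  "pendant_sequence W [] \<longleftrightarrow> True"
| "pendant_sequence W (e # es) \<longleftrightarrow> card (e \<inter> W) = 1 \<and> pendant_sequence (W \<union> e) es"

lemma subhypertree_pendant_sequence:
  "subhypertree V W E \<Longrightarrow> pendant_sequence W es \<Longrightarrow> \<Union>(set es) \<subseteq> V \<Longrightarrow>
    subhypertree V (W \<union> \<Union>(set es)) (E \<union> set es)"
proof (induction es arbitrary: W E)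
  case Nil
  then show ?case by simp
next
  case (Cons e es)
  obtain x where "e \<inter> W = {x}" using Cons.prems(2) by (auto simp: card_1_singleton_iff)
  moreover have "e \<subseteq> V" using Cons.prems(3) by simp
  ultimately have "subhypertree V (W \<union> e) (insert e E)"
    using Cons.prems(1) by (rule subhypertree_attach[rotated])
  moreover have "pendant_sequence (W \<union> e) es" "\<Union>(set es) \<subseteq> V" using Cons.prems(2,3) by simp_all
  ultimately have "subhypertree V (W \<union> e \<union> \<Union>(set es)) (insert e E \<union> set es)"
    by (rule Cons.IH)
  then show ?case by (simp add: Un_assoc)
qed

lemma hypertree_if_pendant_sequence:
  assumes seq: "pendant_sequence {r} es" and V: "V = insert r (\<Union>(set es))"
  shows "hypertree V (set es)"
proof -
  have "subhypertree V {r} {}" using V by (intro subhypertree_singleton) simp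
  moreover have "\<Union>(set es) \<subseteq> V" using V by blast
  ultimately have "subhypertree V ({r} \<union> \<Union>(set es)) ({} \<union> set es)"
    using seq by (intro subhypertree_pendant_sequence)
  then show ?thesis using V by (intro hypertree_if_subhypertree) simp
qed

section \<open>Colourings constant on a vertex set\<close>

definition colorings_const_on :: "'a set \<Rightarrow> 'a set set \<Rightarrow> 'a set \<Rightarrow> (nat \<Rightarrow> nat) \<Rightarrow> ('a \<Rightarrow> nat) set" where
  "colorings_const_on V E S \<alpha> =
     {f \<in> proper_colorings V E. (\<exists>c. \<forall>v\<in>S. f v = c) \<and> (\<forall>i. card {v \<in> V. f v = i} = \<alpha> i)}"

lemma finite_colorings_const_on:
  assumes fV: "finite V"
  shows "finite (colorings_const_on V E S \<alpha>)"
proof (cases "colorings_const_on V E S \<alpha> = {}")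
  case False
  then obtain f0 where f0: "f0 \<in> colorings_const_on V E S \<alpha>" by blast
  have "colorings_const_on V E S \<alpha> \<subseteq> V \<rightarrow>\<^sub>E f0 ` V"
  proof
    fix f assume f: "f \<in> colorings_const_on V E S \<alpha>"
    have "f v \<in> f0 ` V" if v: "v \<in> V" for v
    proof -
      have "card {w \<in> V. f w = f v} \<noteq> 0" using v fV by (auto simp: card_eq_0_iff)
      then have "card {w \<in> V. f0 w = f v} \<noteq> 0" using f f0 unfolding colorings_const_on_def by simp
      then show ?thesis by (metis (mono_tags, lifting) card.empty empty_Collect_eq image_eqI)
    qed
    then show "f \<in> V \<rightarrow>\<^sub>E f0 ` V"
      using f unfolding colorings_const_on_def proper_colorings_def by (auto simp: PiE_iff)
  qed
  moreover have "finite (V \<rightarrow>\<^sub>E f0 ` V)" using fV by (intro finite_PiE) auto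
  ultimately show ?thesis by (rule finite_subset)
qed simp

lemma chrom_symfun_eq_card: "chrom_symfun V E \<alpha> = card (colorings_const_on V E {} \<alpha>)"
  unfolding chrom_symfun_def colorings_const_on_def by simp

text \<open>Deletion--contraction: a colouring of \<open>E\<close> is proper for \<open>insert e E\<close> iff it is
  not constant on \<open>e\<close>, and the colourings constant on \<open>e\<close> are those of the hypergraph in which
  \<open>e\<close> is contracted to a single vertex of weight \<open>card e\<close>.\<close>
lemma chrom_symfun_insert:
  assumes "finite V"
  shows "chrom_symfun V (insert e E) \<alpha> =
    card (colorings_const_on V E {} \<alpha>) - card (colorings_const_on V E e \<alpha>)"
proof -
  have "colorings_const_on V (insert e E) {} \<alpha> = colorings_const_on V E {} \<alpha> - colorings_const_on V E e \<alpha>"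
    unfolding colorings_const_on_def proper_colorings_def by (rule set_eqI) (simp, blast)
  moreover have "colorings_const_on V E e \<alpha> \<subseteq> colorings_const_on V E {} \<alpha>"
    unfolding colorings_const_on_def by auto
  ultimately show ?thesis
    using assms by (simp add: chrom_symfun_eq_card card_Diff_subset finite_colorings_const_on)
qed

lemma card_level_set_comp:
  assumes \<tau>: "bij_betw \<tau> V V"
  shows "card {v \<in> V. f (\<tau> v) = i} = card {v \<in> V. f v = i}"
proof -
  have inj: "inj_on \<tau> {v \<in> V. f (\<tau> v) = i}"
    using bij_betw_imp_inj_on[OF \<tau>] by (rule inj_on_subset) auto
  have "card {v \<in> V. f (\<tau> v) = i} = card (\<tau> ` {v \<in> V. f (\<tau> v) = i})"
    using inj by (rule card_image[symmetric])
  also have "\<dots> = card {w \<in> \<tau> ` V. f w = i}" by (rule arg_cong[where f = card]) auto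
  also have "\<dots> = card {w \<in> V. f w = i}" unfolding bij_betw_imp_surj_on[OF \<tau>] ..
  finally show ?thesis .
qed

lemma const_on_edge_transfer:
  assumes c: "\<forall>v\<in>S. f v = c" and \<tau>S: "\<tau> ` S = S"
    and e': "\<tau> ` (e - S) = e' - S" "e \<inter> S = {} \<longleftrightarrow> e' \<inter> S = {}"
    and d: "\<forall>v\<in>e. f (\<tau> v) = d"
  shows "\<forall>w\<in>e'. f w = d"
proof
  fix w assume w: "w \<in> e'"
  show "f w = d"
  proof (cases "w \<in> S")
    case True
    then have "e' \<inter> S \<noteq> {}" using w by blast
    then have "e \<inter> S \<noteq> {}" using e'(2) by simp
    then obtain s where s: "s \<in> e" "s \<in> S" by blast
    then have "\<tau> s \<in> S" using \<tau>S by blast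
    then have "f (\<tau> s) = c" using c by blast
    moreover have "f (\<tau> s) = d" using d s(1) by blast
    moreover have "f w = c" using c True by blast
    ultimately show ?thesis by simp
  next
    case False
    then have "w \<in> \<tau> ` (e - S)" using w e'(1) by simp
    then show ?thesis using d by blast
  qed
qed

lemma colorings_const_on_compose:
  assumes \<tau>: "bij_betw \<tau> V V" "\<tau> ` S = S" and SV: "S \<subseteq> V" and EV: "\<forall>e\<in>E. e \<subseteq> V"
    and EE': "\<forall>e\<in>E. \<exists>e'\<in>E'. \<tau> ` (e - S) = e' - S \<and> (e \<inter> S = {} \<longleftrightarrow> e' \<inter> S = {})"
    and f: "f \<in> colorings_const_on V E' S \<alpha>"
  shows "restrict (f \<circ> \<tau>) V \<in> colorings_const_on V E S \<alpha>"
proof -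
  define g where "g = restrict (f \<circ> \<tau>) V"
  have g: "g v = f (\<tau> v)" if "v \<in> V" for v using that unfolding g_def by simp
  obtain c where c: "\<forall>v\<in>S. f v = c" using f unfolding colorings_const_on_def by blast
  have fP: "f \<in> V \<rightarrow>\<^sub>E {1..}" and fE: "\<forall>e'\<in>E'. \<not> (\<exists>d. \<forall>v\<in>e'. f v = d)"
    and content: "\<forall>i. card {v \<in> V. f v = i} = \<alpha> i"
    using f unfolding colorings_const_on_def proper_colorings_def by auto
  have proper: "\<not> (\<exists>d. \<forall>v\<in>e. g v = d)" if e: "e \<in> E" for e
  proof
    assume "\<exists>d. \<forall>v\<in>e. g v = d"
    then obtain d where gd: "\<forall>v\<in>e. g v = d" by blast
    have d: "\<forall>v\<in>e. f (\<tau> v) = d"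
    proof
      fix v assume v: "v \<in> e"
      then have "v \<in> V" using EV e by blast
      then show "f (\<tau> v) = d" using g[of v] gd v by simp
    qed
    obtain e' where e': "e' \<in> E'" "\<tau> ` (e - S) = e' - S \<and> (e \<inter> S = {} \<longleftrightarrow> e' \<inter> S = {})"
      using bspec[OF EE' e] by (rule bexE)
    have "\<forall>w\<in>e'. f w = d" using c \<tau>(2) conjunct1[OF e'(2)] conjunct2[OF e'(2)] d
      by (rule const_on_edge_transfer)
    then show False using bspec[OF fE e'(1)] by blast
  qed
  have "card {v \<in> V. g v = i} = \<alpha> i" for i
  proof -
    have "{v \<in> V. g v = i} = {v \<in> V. f (\<tau> v) = i}" using g by auto
    then show ?thesis using card_level_set_comp[OF \<tau>(1), of f i] content by simp
  qed
  moreover have "g \<in> V \<rightarrow>\<^sub>E {1..}"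
  proof -
    have "f (\<tau> v) \<in> {1..}" if "v \<in> V" for v
      using PiE_mem[OF fP] bij_betwE[OF \<tau>(1)] that by blast
    then show ?thesis unfolding g_def by (simp add: restrict_PiE_iff)
  qed
  moreover have "\<forall>v\<in>S. g v = c"
  proof
    fix v assume "v \<in> S"
    then have "v \<in> V" "\<tau> v \<in> S" using SV \<tau>(2) by auto
    then show "g v = c" using g c by simp
  qed
  ultimately have "g \<in> colorings_const_on V E S \<alpha>"
    using proper unfolding colorings_const_on_def proper_colorings_def by blast
  then show ?thesis unfolding g_def .
qed

lemma card_colorings_const_on_le:
  assumes fV: "finite V" and \<tau>: "bij_betw \<tau> V V" "\<tau> ` S = S" and SV: "S \<subseteq> V" and EV: "\<forall>e\<in>E. e \<subseteq> V"
    and EE': "\<forall>e\<in>E. \<exists>e'\<in>E'. \<tau> ` (e - S) = e' - S \<and> (e \<inter> S = {} \<longleftrightarrow> e' \<inter> S = {})"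
  shows "card (colorings_const_on V E' S \<alpha>) \<le> card (colorings_const_on V E S \<alpha>)"
proof (rule card_inj_on_le)
  have \<tau>V: "\<tau> ` V = V" using \<tau>(1) by (rule bij_betw_imp_surj_on)
  show "inj_on (\<lambda>f. restrict (f \<circ> \<tau>) V) (colorings_const_on V E' S \<alpha>)"
  proof
    fix f g assume f: "f \<in> colorings_const_on V E' S \<alpha>" and g: "g \<in> colorings_const_on V E' S \<alpha>"
      and eq: "restrict (f \<circ> \<tau>) V = restrict (g \<circ> \<tau>) V"
    have "f w = g w" if w: "w \<in> V" for w
    proof -
      from w have "w \<in> \<tau> ` V" unfolding \<tau>V .
      then obtain v where "v \<in> V" "w = \<tau> v" by (rule imageE)
      then show ?thesis using fun_cong[OF eq, of v] by simp
    qed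
    moreover have "f \<in> extensional V" "g \<in> extensional V"
      using f g unfolding colorings_const_on_def proper_colorings_def by (auto simp: PiE_def)
    ultimately show "f = g" by (intro extensionalityI[of f V g])
  qed
  show "(\<lambda>f. restrict (f \<circ> \<tau>) V) ` colorings_const_on V E' S \<alpha> \<subseteq> colorings_const_on V E S \<alpha>"
    using colorings_const_on_compose[OF \<tau> SV EV EE'] by blast
  show "finite (colorings_const_on V E S \<alpha>)" using fV by (rule finite_colorings_const_on)
qed

text \<open>Recording each edge \<open>e\<close> as \<open>(e - S, e \<inter> S = {})\<close> describes the hypergraph in which \<open>S\<close> is
  contracted to a single vertex, so \<open>sig\<close> says that \<open>\<tau>\<close> is an isomorphism of the contractions.\<close>
lemma card_colorings_const_on_eq:
  assumes fV: "finite V" and SV: "S \<subseteq> V" and \<tau>V: "\<tau> ` V = V" and \<tau>S: "\<tau> ` S = S"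
    and EV: "\<forall>e\<in>E. e \<subseteq> V" and E'V: "\<forall>e\<in>E'. e \<subseteq> V"
    and sig: "(\<lambda>e. (\<tau> ` (e - S), e \<inter> S = {})) ` E = (\<lambda>e'. (e' - S, e' \<inter> S = {})) ` E'"
  shows "card (colorings_const_on V E S \<alpha>) = card (colorings_const_on V E' S \<alpha>)"
proof (rule antisym)
  have inj: "inj_on \<tau> V" using fV by (rule eq_card_imp_inj_on) (simp add: \<tau>V)
  then have \<tau>: "bij_betw \<tau> V V" using \<tau>V unfolding bij_betw_def by blast
  define \<sigma> where "\<sigma> = inv_into V \<tau>"
  have \<sigma>: "bij_betw \<sigma> V V" unfolding \<sigma>_def using bij_betw_inv_into[OF \<tau>] .
  have \<sigma>\<tau>: "\<sigma> ` \<tau> ` A = A" if "A \<subseteq> V" for A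
    unfolding \<sigma>_def using inv_into_image_cancel[OF inj that] .
  have \<sigma>S: "\<sigma> ` S = S" using \<sigma>\<tau>[OF SV] \<tau>S by simp
  have "\<forall>e\<in>E. \<exists>e'\<in>E'. \<tau> ` (e - S) = e' - S \<and> (e \<inter> S = {} \<longleftrightarrow> e' \<inter> S = {})"
  proof
    fix e assume "e \<in> E"
    then have "(\<tau> ` (e - S), e \<inter> S = {}) \<in> (\<lambda>e'. (e' - S, e' \<inter> S = {})) ` E'"
      unfolding sig[symmetric] by (rule imageI)
    then obtain e' where "e' \<in> E'" "(\<tau> ` (e - S), e \<inter> S = {}) = (e' - S, e' \<inter> S = {})"
      by (rule imageE)
    then show "\<exists>e'\<in>E'. \<tau> ` (e - S) = e' - S \<and> (e \<inter> S = {} \<longleftrightarrow> e' \<inter> S = {})" by auto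
  qed
  then show "card (colorings_const_on V E' S \<alpha>) \<le> card (colorings_const_on V E S \<alpha>)"
    by (rule card_colorings_const_on_le[OF fV \<tau> \<tau>S SV EV])
  have "\<forall>e'\<in>E'. \<exists>e\<in>E. \<sigma> ` (e' - S) = e - S \<and> (e' \<inter> S = {} \<longleftrightarrow> e \<inter> S = {})"
  proof
    fix e' assume "e' \<in> E'"
    then have "(e' - S, e' \<inter> S = {}) \<in> (\<lambda>e. (\<tau> ` (e - S), e \<inter> S = {})) ` E"
      unfolding sig by (rule imageI)
    then obtain e where e: "e \<in> E" "(e' - S, e' \<inter> S = {}) = (\<tau> ` (e - S), e \<inter> S = {})"
      by (rule imageE)
    have "e - S \<subseteq> V" using EV e(1) by blast
    then have "\<sigma> ` (e' - S) = e - S" using \<sigma>\<tau>[of "e - S"] e(2) by simp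
    then show "\<exists>e\<in>E. \<sigma> ` (e' - S) = e - S \<and> (e' \<inter> S = {} \<longleftrightarrow> e \<inter> S = {})"
      using e by (intro bexI[of _ e]) simp_all
  qed
  then show "card (colorings_const_on V E S \<alpha>) \<le> card (colorings_const_on V E' S \<alpha>)"
    by (rule card_colorings_const_on_le[OF fV \<sigma> \<sigma>S SV E'V])
qed

section \<open>Pendant edges\<close>

definition pendant_at :: "'a set set \<Rightarrow> 'a set \<Rightarrow> 'a \<Rightarrow> bool" where
  "pendant_at E e v \<longleftrightarrow> v \<in> e \<and> (\<forall>w\<in>e. w \<noteq> v \<longrightarrow> (\<forall>e'\<in>E. w \<in> e' \<longrightarrow> e' \<subseteq> e))"

definition has_pendant_star :: "'a set set \<Rightarrow> nat \<Rightarrow> bool" where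
  "has_pendant_star E k \<longleftrightarrow> (\<exists>v F. F \<subseteq> E \<and> card F = k \<and> (\<forall>e\<in>F. pendant_at E e v))"

lemma pendant_at_image:
  assumes \<sigma>: "bij_betw \<sigma> V V'" and \<sigma>E: "bij_betw ((`) \<sigma>) E E'" and hyp: "is_hypergraph V E"
    and e: "e \<in> E" and pend: "pendant_at E e v"
  shows "pendant_at E' (\<sigma> ` e) (\<sigma> v)"
  unfolding pendant_at_def
proof (intro conjI ballI impI)
  show "\<sigma> v \<in> \<sigma> ` e" using pend unfolding pendant_at_def by simp
  have inj: "inj_on \<sigma> V" using \<sigma> by (rule bij_betw_imp_inj_on)
  have EV: "\<forall>e\<in>E. e \<subseteq> V" using hyp unfolding is_hypergraph_def .
  fix w' e'' assume w': "w' \<in> \<sigma> ` e" "w' \<noteq> \<sigma> v" and e'': "e'' \<in> E'" "w' \<in> e''"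
  obtain w where w: "w \<in> e" "w' = \<sigma> w" using w'(1) by blast
  obtain e' where e': "e' \<in> E" "e'' = \<sigma> ` e'" using e''(1) \<sigma>E by (metis bij_betw_imp_surj_on imageE)
  obtain x where x: "x \<in> e'" "\<sigma> w = \<sigma> x" using w e' e'' by blast
  have "w \<in> V" "x \<in> V" using w(1) x(1) e e'(1) EV by blast+
  then have "w \<in> e'" using inj_onD[OF inj x(2)] x(1) by simp
  moreover have "w \<noteq> v" using w w'(2) by blast
  ultimately have "e' \<subseteq> e" using pend w(1) e'(1) unfolding pendant_at_def by blast
  then show "e'' \<subseteq> \<sigma> ` e" using e' by blast
qed

lemma has_pendant_star_iso:
  assumes iso: "hyp_isomorphic V E V' E'" and hyp: "is_hypergraph V E" and star: "has_pendant_star E k"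
  shows "has_pendant_star E' k"
proof -
  obtain \<sigma> where \<sigma>: "bij_betw \<sigma> V V'" and \<sigma>E: "bij_betw ((`) \<sigma>) E E'"
    using iso unfolding hyp_isomorphic_def by blast
  obtain v F where F: "F \<subseteq> E" "card F = k" "\<forall>e\<in>F. pendant_at E e v"
    using star unfolding has_pendant_star_def by blast
  have "(`) \<sigma> ` F \<subseteq> E'" using F(1) \<sigma>E by (auto dest: bij_betwE)
  moreover have "card ((`) \<sigma> ` F) = k"
    using F(1,2) \<sigma>E by (metis bij_betw_imp_inj_on card_image inj_on_subset)
  moreover have "\<forall>e'\<in>(`) \<sigma> ` F. pendant_at E' e' (\<sigma> v)"
    using F pendant_at_image[OF \<sigma> \<sigma>E hyp] by blast
  ultimately show ?thesis unfolding has_pendant_star_def by blast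
qed

lemma uniform3_subset_eq: "uniform3 E \<Longrightarrow> e \<in> E \<Longrightarrow> e' \<in> E \<Longrightarrow> e \<subseteq> e' \<Longrightarrow> e = e'"
  unfolding uniform3_def by (metis card_subset_eq card.infinite zero_neq_numeral)

lemma V21_eq: "V21 = {0,1,2,3,4,5,6,7,8,9,10,11,12,13,14,15,16,17,18,19,20}"
  unfolding V21_def by (simp add: atLeast0AtMost atMost_Suc numeral_eq_Suc) auto

lemma uniform3_E: "uniform3 E1" "uniform3 E2" "uniform3 E3" "uniform3 E4"
  unfolding uniform3_def E1_def E2_def E3_def E4_def by simp_all

lemma hypertree_E1: "hypertree V21 E1"
proof -
  let ?es = "[{0,1,2},{0,3,4},{1,5,6},{0,7,8},{2,9,10},{1,11,12},{9,13,14},{16,3,15},{17,18,7},{19,20,13}]"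
  have "hypertree V21 (set ?es)" by (rule hypertree_if_pendant_sequence[where r = 0]) (auto simp: V21_eq)
  then show ?thesis by (simp add: E1_def)
qed

lemma hypertree_E2: "hypertree V21 E2"
proof -
  let ?es = "[{0,1,2},{0,3,4},{1,5,6},{0,7,8},{2,9,10},{1,11,12},{9,13,14},{16,3,15},{17,18,5},{19,20,15}]"
  have "hypertree V21 (set ?es)" by (rule hypertree_if_pendant_sequence[where r = 0]) (auto simp: V21_eq)
  then show ?thesis by (simp add: E2_def)
qed

lemma hypertree_E3: "hypertree V21 E3"
proof -
  let ?es = "[{0,1,2},{0,3,4},{1,5,6},{0,7,8},{5,9,10},{5,11,12},{0,13,14},{16,2,15},{1,17,18},{19,20,15}]"
  have "hypertree V21 (set ?es)" by (rule hypertree_if_pendant_sequence[where r = 0]) (auto simp: V21_eq)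
  then show ?thesis by (simp add: E3_def)
qed

lemma hypertree_E4: "hypertree V21 E4"
proof -
  let ?es = "[{0,1,2},{0,3,4},{1,5,6},{0,7,8},{2,9,10},{1,11,12},{0,13,14},{16,9,15},{17,18,9},{3,19,20}]"
  have "hypertree V21 (set ?es)" by (rule hypertree_if_pendant_sequence[where r = 0]) (auto simp: V21_eq)
  then show ?thesis by (simp add: E4_def)
qed

definition E1_del :: "nat set set" where
  "E1_del = {{0,3,4},{1,5,6},{0,7,8},{2,9,10},{1,11,12},{9,13,14},{16,3,15},{17,18,7},{19,20,13}}"
definition E2_del :: "nat set set" where
  "E2_del = {{0,3,4},{1,5,6},{0,7,8},{2,9,10},{1,11,12},{9,13,14},{16,3,15},{17,18,5},{19,20,15}}"
definition E3_del :: "nat set set" where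
  "E3_del = {{0,3,4},{1,5,6},{0,7,8},{5,9,10},{5,11,12},{0,13,14},{16,2,15},{1,17,18},{19,20,15}}"
definition E4_del :: "nat set set" where
  "E4_del = {{0,3,4},{1,5,6},{0,7,8},{2,9,10},{1,11,12},{0,13,14},{16,9,15},{17,18,9},{3,19,20}}"

lemma E_insert_del:
  "E1 = insert {0,1,2} E1_del" "E2 = insert {0,1,2} E2_del"
  "E3 = insert {0,1,2} E3_del" "E4 = insert {0,1,2} E4_del"
  unfolding E1_def E2_def E3_def E4_def E1_del_def E2_del_def E3_del_def E4_del_def by (rule refl)+

text \<open>Each permutation below, listed by its values at \<open>0, \<dots>, 20\<close>, is an isomorphism between the
  two deleted hyperforests, respectively between their contractions of \<open>{0, 1, 2}\<close>.\<close>

lemma card_colorings_E1_E2_deleted: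
  "card (colorings_const_on V21 E1_del {} \<alpha>) = card (colorings_const_on V21 E2_del {} \<alpha>)"
  by (rule card_colorings_const_on_eq
      [where \<tau> = "(!) [3, 9, 17, 15, 16, 2, 10, 0, 4, 5, 18, 13, 14, 1, 6, 19, 20, 7, 8, 11, 12]"])
    (simp_all add: V21_eq E1_del_def E2_del_def, simp_all add: set_eq_subset)

lemma card_colorings_E1_E2_contracted:
  "card (colorings_const_on V21 E1_del {0,1,2} \<alpha>) = card (colorings_const_on V21 E2_del {0,1,2} \<alpha>)"
  by (rule card_colorings_const_on_eq
      [where \<tau> = "(!) [0, 1, 2, 5, 6, 7, 8, 9, 10, 3, 4, 11, 12, 15, 16, 17, 18, 13, 14, 19, 20]"])
    (simp_all add: V21_eq E1_del_def E2_del_def insert_Diff_if, simp_all add: set_eq_subset)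

lemma chrom_symfun_E1_E2: "chrom_symfun V21 E1 = chrom_symfun V21 E2"
proof
  fix \<alpha>
  have "finite V21" by (simp add: V21_def)
  then show "chrom_symfun V21 E1 \<alpha> = chrom_symfun V21 E2 \<alpha>"
    by (simp only: E_insert_del chrom_symfun_insert card_colorings_E1_E2_deleted
        card_colorings_E1_E2_contracted)
qed

lemma card_colorings_E3_E4_deleted:
  "card (colorings_const_on V21 E3_del {} \<alpha>) = card (colorings_const_on V21 E4_del {} \<alpha>)"
  by (rule card_colorings_const_on_eq
      [where \<tau> = "(!) [9, 3, 5, 2, 10, 0, 4, 15, 16, 7, 8, 13, 14, 17, 18, 1, 6, 19, 20, 11, 12]"])
    (simp_all add: V21_eq E3_del_def E4_del_def, simp_all add: set_eq_subset)

lemma card_colorings_E3_E4_contracted: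
  "card (colorings_const_on V21 E3_del {0,1,2} \<alpha>) = card (colorings_const_on V21 E4_del {0,1,2} \<alpha>)"
  by (rule card_colorings_const_on_eq
      [where \<tau> = "(!) [0, 1, 2, 7, 8, 9, 10, 13, 14, 15, 16, 17, 18, 5, 6, 3, 4, 11, 12, 19, 20]"])
    (simp_all add: V21_eq E3_del_def E4_del_def insert_Diff_if, simp_all add: set_eq_subset)

lemma chrom_symfun_E3_E4: "chrom_symfun V21 E3 = chrom_symfun V21 E4"
proof
  fix \<alpha>
  have "finite V21" by (simp add: V21_def)
  then show "chrom_symfun V21 E3 \<alpha> = chrom_symfun V21 E4 \<alpha>"
    by (simp only: E_insert_del chrom_symfun_insert card_colorings_E3_E4_deleted
        card_colorings_E3_E4_contracted)
qed

lemma has_pendant_star_E1: "has_pendant_star E1 2"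
proof -
  have "\<not> {1,5,6} \<subseteq> {1,11,12::nat}" by simp
  then have "card {{1,5,6},{1,11,12::nat}} = 2" by (auto simp: card_insert_if)
  moreover have "{{1,5,6},{1,11,12}} \<subseteq> E1" "\<forall>e\<in>{{1,5,6},{1,11,12}}. pendant_at E1 e 1"
    by (simp_all add: E1_def pendant_at_def)
  ultimately show ?thesis unfolding has_pendant_star_def by blast
qed

lemma pendant_edges_E2:
  "\<forall>e1\<in>E2. \<forall>e2\<in>E2. pendant_at E2 e1 v \<longrightarrow> pendant_at E2 e2 v \<longrightarrow> e2 \<subseteq> e1"
  unfolding E2_def pendant_at_def by (simp; linarith)

lemma not_has_pendant_star_E2: "\<not> has_pendant_star E2 2"
proof
  assume "has_pendant_star E2 2"
  then obtain v F where F: "F \<subseteq> E2" "card F = 2" "\<forall>e\<in>F. pendant_at E2 e v"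
    unfolding has_pendant_star_def by blast
  from F(2) obtain a b where ab: "F = {a, b}" "a \<noteq> b" unfolding card_2_iff by blast
  then have "a \<in> E2" "b \<in> E2" "pendant_at E2 a v" "pendant_at E2 b v" using F(1,3) by auto
  then have "b \<subseteq> a" using pendant_edges_E2 by blast
  then have "b = a" by (rule uniform3_subset_eq[OF uniform3_E(2) \<open>b \<in> E2\<close> \<open>a \<in> E2\<close>])
  then show False using ab(2) by simp
qed

lemma has_pendant_star_E3: "has_pendant_star E3 3"
proof -
  have "\<not> {0,3,4} \<subseteq> {0,7,8::nat}" "\<not> {0,3,4} \<subseteq> {0,13,14::nat}" "\<not> {0,7,8} \<subseteq> {0,13,14::nat}"
    by simp_all
  then have "card {{0,3,4},{0,7,8},{0,13,14::nat}} = 3" by (auto simp: card_insert_if)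
  moreover have "{{0,3,4},{0,7,8},{0,13,14}} \<subseteq> E3" "\<forall>e\<in>{{0,3,4},{0,7,8},{0,13,14}}. pendant_at E3 e 0"
    by (simp_all add: E3_def pendant_at_def)
  ultimately show ?thesis unfolding has_pendant_star_def by blast
qed

lemma pendant_edges_E4:
  "\<forall>e1\<in>E4. \<forall>e2\<in>E4. \<forall>e3\<in>E4. pendant_at E4 e1 v \<longrightarrow> pendant_at E4 e2 v \<longrightarrow> pendant_at E4 e3 v \<longrightarrow>
      e2 \<subseteq> e1 \<or> e3 \<subseteq> e1 \<or> e3 \<subseteq> e2"
  unfolding E4_def pendant_at_def by (simp; linarith)

lemma not_has_pendant_star_E4: "\<not> has_pendant_star E4 3"
proof
  assume "has_pendant_star E4 3"
  then obtain v F where F: "F \<subseteq> E4" "card F = 3" "\<forall>e\<in>F. pendant_at E4 e v"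
    unfolding has_pendant_star_def by blast
  from F(2) obtain a b c where abc: "F = {a, b, c}" "a \<noteq> b" "b \<noteq> c" "a \<noteq> c"
    unfolding card_3_iff by blast
  then have E: "a \<in> E4" "b \<in> E4" "c \<in> E4" and "pendant_at E4 a v" "pendant_at E4 b v" "pendant_at E4 c v"
    using F(1,3) by auto
  then have "b \<subseteq> a \<or> c \<subseteq> a \<or> c \<subseteq> b" using pendant_edges_E4 by blast
  then show False
    using uniform3_subset_eq[OF uniform3_E(4)] E abc(2-4) by metis
qed

lemma not_iso_E1_E2: "\<not> hyp_isomorphic V21 E1 V21 E2"
  using has_pendant_star_iso[OF _ _ has_pendant_star_E1] not_has_pendant_star_E2 hypertree_E1
  unfolding hypertree_def by blast

lemma not_iso_E3_E4: "\<not> hyp_isomorphic V21 E3 V21 E4"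
  using has_pendant_star_iso[OF _ _ has_pendant_star_E3] not_has_pendant_star_E4 hypertree_E3
  unfolding hypertree_def by blast

theorem mainTheorem14:
  shows "(hypertree V21 E1 \<and> uniform3 E1) \<and> (hypertree V21 E2 \<and> uniform3 E2) \<and>
         (hypertree V21 E3 \<and> uniform3 E3) \<and> (hypertree V21 E4 \<and> uniform3 E4) \<and>
         \<not> hyp_isomorphic V21 E1 V21 E2 \<and> \<not> hyp_isomorphic V21 E3 V21 E4 \<and>
         chrom_symfun V21 E1 = chrom_symfun V21 E2 \<and> chrom_symfun V21 E3 = chrom_symfun V21 E4"
  by (intro conjI hypertree_E1 hypertree_E2 hypertree_E3 hypertree_E4 uniform3_E
      not_iso_E1_E2 not_iso_E3_E4 chrom_symfun_E1_E2 chrom_symfun_E3_E4)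

end
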